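(* Let $N\ge3$, $1<k<N-1$, $p>0$, $c>0$, and let $v:\mathbb R^{N-1}\to[0,\infty]$ be measurable with $0<v<\infty$ a.e. in $\mathbb R^{N-1}$ and $$v(x')\ge c\int_{\mathbb R^{N-1}}\frac{v(y')^p}{|x'-y'|^{k-1}}dy'\quad\text{for a.e. }x'\in\mathbb R^{N-1}.$$ Then there exists $C>0$ such that $v(x')\ge C|x'|^{1-k}$ for a.e. $x'\in\mathbb R^{N-1}$ with $|x'|>1$. *)

theory Defs
  imports "HOL-Analysis.Analysis"
begin

definition ennreal_powr :: "ennreal \<Rightarrow> real \<Rightarrow> ennreal" where
  "ennreal_powr x p = (if x = \<infinity> then \<infinity> else ennreal (enn2real x powr p))"

end

theory Submission
  imports Defs
begin

text \<open>That mass is positive, since \<open>v > 0\<close>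
  a.e. and the ball has positive measure; and for \<open>|x| > 1\<close> and \<open>|y| < 1\<close> we have
  \<open>|x - y| \<le> 2|x|\<close>, so the integral in the hypothesis is at least that mass times
  \<open>(2|x|)^(1-k)\<close>.\<close>

lemma ennreal_powr_measurable [measurable]:
  assumes [measurable]: "v \<in> borel_measurable M"
  shows "(\<lambda>y. ennreal_powr (v y) p) \<in> borel_measurable M"
proof -
  have [measurable]: "{y \<in> space M. v y = \<infinity>} \<in> sets M"
    by measurable
  show ?thesis
    unfolding ennreal_powr_def by measurable
qed

lemma ennreal_powr_pos: "0 < x \<Longrightarrow> 0 < ennreal_powr x p"
  by (cases "x = \<infinity>") (auto simp: ennreal_powr_def enn2real_eq_0_iff)

lemma ex_real_pos_le_ennreal:
  fixes x :: ennreal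
  assumes "0 < x"
  obtains a where "0 < a" "ennreal a \<le> x"
proof (cases "x = \<infinity>")
  case True
  then show ?thesis using that[of 1] by simp
next
  case False
  then show ?thesis
    using that[of "enn2real x"] assms by (simp add: enn2real_positive_iff less_top)
qed

lemma ball_notin_null_sets_lebesgue:
  fixes x :: "'a::euclidean_space"
  assumes "0 < r"
  shows "ball x r \<notin> null_sets lebesgue"
proof
  assume "ball x r \<in> null_sets lebesgue"
  then have "measure lebesgue (ball x r) = 0"
    by (simp add: measure_def null_setsD1)
  moreover have "measure lborel (ball x r) > 0"
    using content_ball_pos[OF assms] by simp
  ultimately show False
    by (simp add: measure_completion)
qed

lemma nn_integral_indicator_pos:
  fixes f :: "'a \<Rightarrow> ennreal"
  assumes f: "f \<in> borel_measurable M" and S: "S \<in> sets M" "S \<notin> null_sets M"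
    and pos: "AE x in M. 0 < f x"
  shows "0 < (\<integral>\<^sup>+ x. f x * indicator S x \<partial>M)"
proof (rule ccontr)
  assume "\<not> ?thesis"
  then have "AE x in M. f x * indicator S x = 0"
    using f S(1) by (simp add: nn_integral_0_iff_AE)
  with pos have "AE x in M. x \<notin> S"
    by eventually_elim (auto simp: indicator_def)
  with S show False
    by (simp add: AE_iff_null_sets)
qed

lemma norm_diff_le_double:
  fixes x y :: "'a::real_normed_vector"
  assumes "norm y < 1" "1 < norm x"
  shows "norm (x - y) \<le> 2 * norm x"
  using norm_triangle_ineq4[of x y] assms by linarith

lemma nn_integral_riesz_kernel_ge_ball_mass:
  fixes g :: "'a::real_normed_vector \<Rightarrow> ennreal"
  assumes g: "g \<in> borel_measurable M" and ball: "ball 0 1 \<in> sets M"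
    and k: "1 \<le> k" and x: "1 < norm x"
  shows "(\<integral>\<^sup>+ y. g y * indicator (ball 0 1) y \<partial>M) / ennreal ((2 * norm x) powr (k - 1))
    \<le> (\<integral>\<^sup>+ y. g y / ennreal (norm (x - y) powr (k - 1)) \<partial>M)"
proof -
  define D where "D = (2 * norm x) powr (k - 1)"
  have D: "0 < D" using x by (auto simp: D_def)
  have pointwise: "g y * indicator (ball 0 1) y / ennreal D
      \<le> g y / ennreal (norm (x - y) powr (k - 1))" for y
  proof (cases "y \<in> ball 0 1")
    case True
    then have "norm (x - y) powr (k - 1) \<le> D"
      unfolding D_def using k x norm_diff_le_double[of y x] by (intro powr_mono2) auto
    then have "inverse (ennreal D) \<le> inverse (ennreal (norm (x - y) powr (k - 1)))"
      by (cases "norm (x - y) = 0") (auto simp: inverse_ennreal D le_imp_inverse_le)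
    with True show ?thesis
      by (simp add: divide_ennreal_def mult_left_mono)
  qed simp
  have "(\<integral>\<^sup>+ y. g y * indicator (ball 0 1) y \<partial>M) / ennreal D
      = (\<integral>\<^sup>+ y. g y * indicator (ball 0 1) y / ennreal D \<partial>M)"
    using g ball by (simp add: nn_integral_divide)
  also have "\<dots> \<le> (\<integral>\<^sup>+ y. g y / ennreal (norm (x - y) powr (k - 1)) \<partial>M)"
    by (intro nn_integral_mono pointwise)
  finally show ?thesis
    by (simp add: D_def)
qed

theorem lemma3p1:
  fixes v :: "real ^ 'n \<Rightarrow> ennreal" and k p c :: real
  assumes dim: "CARD('n) \<ge> 2"
    and k: "1 < k" "k < real CARD('n)"
    and p: "p > 0" and c: "c > 0"
    and meas: "v \<in> borel_measurable lebesgue"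
    and fin: "AE x in lebesgue. 0 < v x \<and> v x < \<infinity>"
    and ineq: "AE x in lebesgue.
        v x \<ge> ennreal c * (\<integral>\<^sup>+ y. ennreal_powr (v y) p / ennreal (norm (x - y) powr (k - 1)) \<partial>lebesgue)"
  shows "\<exists>C>0. AE x in lebesgue. norm x > 1 \<longrightarrow> v x \<ge> ennreal (C * norm x powr (1 - k))"
proof -
  define mass where "mass = (\<integral>\<^sup>+ y. ennreal_powr (v y) p * indicator (ball 0 1) y \<partial>lebesgue)"
  have "0 < mass"
    unfolding mass_def using meas fin ball_notin_null_sets_lebesgue[of 1 "0::real^'n"]
    by (intro nn_integral_indicator_pos) (auto elim: AE_mp intro: ennreal_powr_pos)
  then obtain a where a: "0 < a" "ennreal a \<le> mass"
    by (rule ex_real_pos_le_ennreal)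
  have "AE x in lebesgue. norm x > 1 \<longrightarrow> v x \<ge> ennreal (c * a / 2 powr (k - 1) * norm x powr (1 - k))"
    using ineq
  proof eventually_elim
    case (elim x)
    show ?case
    proof
      assume x: "norm x > 1"
      define D where "D = (2 * norm x) powr (k - 1)"
      have D: "0 < D" using x by (auto simp: D_def)
      have "c * a / 2 powr (k - 1) * norm x powr (1 - k) = c * (a / D)"
        using x by (simp add: D_def powr_mult powr_diff field_simps)
      then have "ennreal (c * a / 2 powr (k - 1) * norm x powr (1 - k)) = ennreal c * (ennreal a / ennreal D)"
        using c a D by (simp only: ennreal_mult divide_ennreal less_imp_le divide_nonneg_pos)
      also have "\<dots> \<le> ennreal c * (mass / ennreal D)"
        using a by (intro mult_left_mono divide_right_mono_ennreal) auto
      also have "\<dots> \<le> ennreal c * (\<integral>\<^sup>+ y. ennreal_powr (v y) p / ennreal (norm (x - y) powr (k - 1)) \<partial>lebesgue)"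
        unfolding mass_def D_def using meas k x
        by (intro mult_left_mono nn_integral_riesz_kernel_ge_ball_mass) auto
      also have "\<dots> \<le> v x" by (rule elim)
      finally show "v x \<ge> ennreal (c * a / 2 powr (k - 1) * norm x powr (1 - k))" .
    qed
  qed
  then show ?thesis
    using c a by (intro exI[of _ "c * a / 2 powr (k - 1)"]) auto
qed

end
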